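(* Let $k\in\{1,\dots,N-1\}$. For every integer $m\ge1$ with $m\le (N-k)/2$, $$Z^{2m-1}|0_k\rangle=\prod_{j=0}^{m-1}\Big(\frac{n_{k+2j+1}}{n_{k+2j}}\Big)^{1/2}\varphi_{0_{k+2m-1}},\qquad Z^{2m}|0_k\rangle=\prod_{j=0}^{m-1}\Big(\frac{n_{k+2j+1}}{n_{k+2j}}\Big)^{1/2}|0_{k+2m}\rangle.$$
   Context: Fix $N\ge2$ and integers $n_1\ge n_2\ge\dots\ge n_N\ge1$. Let $\mathcal H=\bigoplus_{k=1}^N E_k$ where $E_k$ has orthonormal basis $\{|a_k\rangle:0\le a\le n_k-1\}$. For vectors $x,y$, $|x\rangle\langle y|$ is the operator $u\mapsto\langle y,u\rangle x$. $\zeta_k=e^{2\pi i/n_k}$, $\varphi_{a_k}=n_k^{-1/2}\sum_{b=0}^{n_k-1}\zeta_k^{-ba}|b_k\rangle$. For $1\le k\le N-1$, $Z_k=n_k^{-1/2}\sum_{b=0}^{n_{k+1}-1}\sum_{a=0}^{n_k-1}\zeta_k^{ba}|b_{k+1}\rangle\langle a_k|$, and the transport operator is $Z=\sum_{k=1}^{N-1}Z_k$ (acting on $\mathcal H$, equal to $Z_k$ on $E_k$ and zero on $E_N$). *)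

theory Defs
  imports Complex_Main
begin

text \<open>Vectors of H = (+)_{k=1..N} E_k are modelled as functions v :: nat => nat => complex,
 v k a being the coefficient of the basis vector |a_k> (meaningful for 1 <= k <= N, a < n k).\<close>

type_synonym hvec = "nat \<Rightarrow> nat \<Rightarrow> complex"

definition zeta :: "(nat \<Rightarrow> nat) \<Rightarrow> nat \<Rightarrow> complex" where
  "zeta n k = exp (2 * of_real pi * \<i> / of_nat (n k))"

definition ket :: "(nat \<Rightarrow> nat) \<Rightarrow> nat \<Rightarrow> nat \<Rightarrow> hvec" where
  "ket n k a = (\<lambda>j b. if j = k \<and> b = a then 1 else 0)"

definition phi :: "(nat \<Rightarrow> nat) \<Rightarrow> nat \<Rightarrow> nat \<Rightarrow> hvec" where
  "phi n k a = (\<lambda>j b. if j = k \<and> b < n k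
      then of_real (1 / sqrt (real (n k))) * inverse (zeta n k ^ (b * a)) else 0)"

text \<open>Transport operator Z = sum_{k=1}^{N-1} Z_k, where
  Z_k = n_k^{-1/2} sum_{b<n_{k+1}} sum_{a<n_k} zeta_k^{ba} |b_{k+1}><a_k|.\<close>
definition Zop :: "nat \<Rightarrow> (nat \<Rightarrow> nat) \<Rightarrow> hvec \<Rightarrow> hvec" where
  "Zop N n v = (\<lambda>j b. if 2 \<le> j \<and> j \<le> N \<and> b < n j
      then of_real (1 / sqrt (real (n (j - 1)))) *
           (\<Sum>a<n (j - 1). zeta n (j - 1) ^ (b * a) * v (j - 1) a)
      else 0)"

definition scaleH :: "complex \<Rightarrow> hvec \<Rightarrow> hvec" where
  "scaleH c v = (\<lambda>j b. c * v j b)"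

end

theory Submission
  imports Defs "HOL-Analysis.Complex_Transcendental"
begin

text \<open>Since all entries of Z_k in the column of 0_k equal n_k^{-1/2}, Z maps 0_k to a multiple
  of phi_{0_{k+1}}. Conversely, the row of Z_k belonging to b_{k+1} is the character
  a \<mapsto> zeta_k^{ba} of the cyclic group of order n_k, which is orthogonal to the constant
  vector phi_{0_k} unless b = 0; here n_{k+1} \<le> n_k guarantees b < n_k. Hence Z maps phi_{0_k}
  to 0_{k+1}, and the corollary follows by alternating the two steps.\<close>

lemma zeta_pow: "zeta n k ^ b = exp (2 * of_real pi * \<i> * of_nat b / of_nat (n k))"
  unfolding zeta_def by (simp add: exp_of_nat_mult[symmetric] mult_ac)

lemma zeta_pow_self: "0 < n k \<Longrightarrow> zeta n k ^ n k = 1"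
  by (simp add: zeta_pow)

lemma zeta_pow_neq_1:
  assumes "0 < b" "b < n k"
  shows "zeta n k ^ b \<noteq> 1"
proof
  assume "zeta n k ^ b = 1"
  then obtain j :: int where "2 * pi * real b / real (n k) = of_int (2 * j) * pi"
    by (auto simp: zeta_pow exp_eq_1)
  then have "real b / real (n k) = of_int (2 * j) * pi / (2 * pi)"
    by (metis nonzero_mult_div_cancel_left pi_neq_zero times_divide_eq_right
        mult_eq_0_iff zero_neq_numeral)
  then have "real b / real (n k) = of_int j"
    by simp
  moreover have "0 < real b / real (n k)" "real b / real (n k) < 1"
    using assms by auto
  ultimately show False
    by simp
qed

lemma sum_zeta_pow_mult_eq_0:
  assumes "0 < b" "b < n k"
  shows "(\<Sum>a<n k. zeta n k ^ (b * a)) = 0"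
proof -
  have "(\<Sum>a<n k. zeta n k ^ (b * a)) = (\<Sum>a<n k. (zeta n k ^ b) ^ a)"
    by (simp add: power_mult)
  also have "\<dots> = ((zeta n k ^ b) ^ n k - 1) / (zeta n k ^ b - 1)"
    using zeta_pow_neq_1[of b n k] assms by (simp add: geometric_sum)
  also have "(zeta n k ^ b) ^ n k = (zeta n k ^ n k) ^ b"
    by (simp flip: power_mult add: mult.commute)
  also have "\<dots> = 1"
    using assms by (simp add: zeta_pow_self)
  finally show ?thesis
    by simp
qed

lemma scaleH_one [simp]: "scaleH 1 v = v"
  by (simp add: scaleH_def)

lemma scaleH_scaleH [simp]: "scaleH a (scaleH b v) = scaleH (a * b) v"
  by (simp add: scaleH_def mult.assoc)

lemma Zop_scaleH: "Zop N n (scaleH c v) = scaleH c (Zop N n v)"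
  unfolding Zop_def scaleH_def by (auto simp: sum_distrib_left mult_ac fun_eq_iff)

lemma Zop_ket_0:
  assumes "1 \<le> i" "i < N"
  shows "Zop N n (ket n i 0) =
    scaleH (of_real (sqrt (real (n (Suc i)) / real (n i)))) (phi n (Suc i) 0)"
proof (intro ext)
  fix j b
  show "Zop N n (ket n i 0) j b =
    scaleH (of_real (sqrt (real (n (Suc i)) / real (n i)))) (phi n (Suc i) 0) j b"
  proof (cases "j = Suc i \<and> b < n (Suc i)")
    case True
    have "zeta n i ^ (b * a) * ket n i 0 i a = (if a = 0 then 1 else 0)" for a
      by (simp add: ket_def)
    then have "(\<Sum>a<n i. zeta n i ^ (b * a) * ket n i 0 i a) = (if 0 < n i then 1 else 0)"
      by simp
    moreover have "sqrt (real (n (Suc i)) / real (n i)) * (1 / sqrt (real (n (Suc i))))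
        = (if 0 < n i then 1 / sqrt (real (n i)) else 0)"
      using True by (simp add: real_sqrt_divide)
    then have "complex_of_real (sqrt (real (n (Suc i)) / real (n i)))
        * complex_of_real (1 / sqrt (real (n (Suc i))))
        = (if 0 < n i then complex_of_real (1 / sqrt (real (n i))) else 0)"
      by (metis of_real_mult of_real_0)
    ultimately show ?thesis
      using True assms unfolding Zop_def scaleH_def phi_def
      by (simp del: of_real_divide)
  next
    case False
    then have "j - 1 \<noteq> i" if "2 \<le> j" "b < n j"
      using that by auto
    with False show ?thesis
      unfolding Zop_def scaleH_def ket_def phi_def by auto
  qed
qed

lemma Zop_phi_0:
  assumes "1 \<le> i" "i < N" "0 < n (Suc i)" "n (Suc i) \<le> n i"
  shows "Zop N n (phi n i 0) = ket n (Suc i) 0"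
proof (intro ext)
  fix j b
  show "Zop N n (phi n i 0) j b = ket n (Suc i) 0 j b"
  proof (cases "j = Suc i \<and> b < n (Suc i)")
    case True
    have "(\<Sum>a<n i. zeta n i ^ (b * a) * phi n i 0 i a)
        = (\<Sum>a<n i. zeta n i ^ (b * a)) * of_real (1 / sqrt (real (n i)))"
      unfolding sum_distrib_right by (intro sum.cong) (auto simp: phi_def)
    also have "(\<Sum>a<n i. zeta n i ^ (b * a)) = (if b = 0 then of_nat (n i) else 0)"
      using True assms sum_zeta_pow_mult_eq_0[of b n i] by simp
    finally have sum: "(\<Sum>a<n i. zeta n i ^ (b * a) * phi n i 0 i a)
        = (if b = 0 then of_real (real (n i) * (1 / sqrt (real (n i)))) else 0)"
      by simp
    have "1 / sqrt (real (n i)) * (real (n i) * (1 / sqrt (real (n i)))) = 1"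
      using assms by (simp add: field_simps)
    then have "complex_of_real (1 / sqrt (real (n i)))
        * complex_of_real (real (n i) * (1 / sqrt (real (n i)))) = 1"
      by (metis of_real_mult of_real_1)
    moreover have "j = Suc i"
      using True by simp
    ultimately show ?thesis
      using True assms unfolding Zop_def ket_def by (simp add: sum del: of_real_divide of_real_mult)
  next
    case False
    then have "j - 1 \<noteq> i" if "2 \<le> j" "b < n j"
      using that by auto
    with False assms show ?thesis
      unfolding Zop_def ket_def phi_def by auto
  qed
qed

lemma pos_if_antimono_last_pos:
  fixes n :: "nat \<Rightarrow> nat"
  assumes "\<And>i. 1 \<le> i \<Longrightarrow> i < N \<Longrightarrow> n (Suc i) \<le> n i" "1 \<le> n N" "1 \<le> i" "i \<le> N"
  shows "0 < n i"
  using assms(4,3)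
proof (induction i rule: inc_induct)
  case base
  then show ?case
    using assms(2) by simp
next
  case (step i)
  then show ?case
    using assms(1)[of i] by simp
qed

definition transport_factor :: "(nat \<Rightarrow> nat) \<Rightarrow> nat \<Rightarrow> nat \<Rightarrow> real" where
  "transport_factor n k m = (\<Prod>j<m. sqrt (real (n (k + 2 * j + 1)) / real (n (k + 2 * j))))"

lemma transport_factor_0 [simp]: "transport_factor n k 0 = 1"
  by (simp add: transport_factor_def)

lemma transport_factor_Suc:
  "transport_factor n k (Suc m) =
    transport_factor n k m * sqrt (real (n (Suc (k + 2 * m))) / real (n (k + 2 * m)))"
  by (simp add: transport_factor_def)

context
  fixes N :: nat and n :: "nat \<Rightarrow> nat"
  assumes antimono: "\<And>i. 1 \<le> i \<Longrightarrow> i < N \<Longrightarrow> n (Suc i) \<le> n i"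
    and pos: "\<And>i. 1 \<le> i \<Longrightarrow> i \<le> N \<Longrightarrow> 0 < n i"
begin

lemma Zop_pow_even_ket_0:
  assumes "1 \<le> k" "k + 2 * m \<le> N"
  shows "(Zop N n ^^ (2 * m)) (ket n k 0) =
    scaleH (of_real (transport_factor n k m)) (ket n (k + 2 * m) 0)"
  using assms(2)
proof (induction m)
  case 0
  then show ?case
    by simp
next
  case (Suc m)
  let ?i = "k + 2 * m"
  have "(Zop N n ^^ (2 * Suc m)) (ket n k 0) = Zop N n (Zop N n ((Zop N n ^^ (2 * m)) (ket n k 0)))"
    by simp
  also have "\<dots> = scaleH (of_real (transport_factor n k m))
      (Zop N n (scaleH (of_real (sqrt (real (n (Suc ?i)) / real (n ?i)))) (phi n (Suc ?i) 0)))"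
    using Suc assms(1) by (simp add: Zop_scaleH Zop_ket_0)
  also have "\<dots> = scaleH (of_real (transport_factor n k (Suc m))) (ket n (Suc (Suc ?i)) 0)"
    using Suc assms(1)
    by (simp add: Zop_scaleH Zop_phi_0 antimono pos transport_factor_Suc mult.commute)
  finally show ?case
    by simp
qed

lemma Zop_pow_odd_ket_0:
  assumes "1 \<le> k" "k + 2 * m < N"
  shows "(Zop N n ^^ Suc (2 * m)) (ket n k 0) =
    scaleH (of_real (transport_factor n k (Suc m))) (phi n (Suc (k + 2 * m)) 0)"
  using assms by (simp add: Zop_pow_even_ket_0 Zop_scaleH Zop_ket_0 transport_factor_Suc)

end

theorem corollary2p11:
  fixes N :: nat and n :: "nat \<Rightarrow> nat" and k m :: nat
  assumes "N \<ge> 2"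
    and "\<And>i. 1 \<le> i \<Longrightarrow> i < N \<Longrightarrow> n (Suc i) \<le> n i"
    and "n N \<ge> 1"
    and "1 \<le> k" and "k \<le> N - 1"
    and "1 \<le> m" and "2 * m \<le> N - k"
  shows "(Zop N n ^^ (2 * m - 1)) (ket n k 0) =
           scaleH (of_real (\<Prod>j<m. sqrt (real (n (k + 2 * j + 1)) / real (n (k + 2 * j)))))
                  (phi n (k + 2 * m - 1) 0)
       \<and> (Zop N n ^^ (2 * m)) (ket n k 0) =
           scaleH (of_real (\<Prod>j<m. sqrt (real (n (k + 2 * j + 1)) / real (n (k + 2 * j)))))
                  (ket n (k + 2 * m) 0)"
proof -
  have pos: "\<And>i. 1 \<le> i \<Longrightarrow> i \<le> N \<Longrightarrow> 0 < n i"
    using pos_if_antimono_last_pos assms(2,3) by blast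
  obtain m' where m': "m = Suc m'"
    using assms(6) by (cases m) auto
  have "(Zop N n ^^ (2 * m - 1)) (ket n k 0) =
      scaleH (of_real (transport_factor n k m)) (phi n (k + 2 * m - 1) 0)"
    using Zop_pow_odd_ket_0[of N n k m', OF assms(2) pos] assms(4-7) m' by simp
  moreover have "(Zop N n ^^ (2 * m)) (ket n k 0) =
      scaleH (of_real (transport_factor n k m)) (ket n (k + 2 * m) 0)"
    using Zop_pow_even_ket_0[of N n k m, OF assms(2) pos] assms(4-7) by simp
  ultimately show ?thesis
    unfolding transport_factor_def by simp
qed

end
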